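(* Let $m,k,t$ be positive integers with $t<(m-1)/4$, let $C=\{2i\mid 2\leq i\leq t\}\cup\{1,2t+1\}$, and let $c(x)=1+\sum_{j\in C}(x^j+x^{m-j})\in\mathbb{F}_2[x]$. Then $\gcd(c(x^k),x^m-1)=1$ if and only if $\gcd(m,(2t+3)k)=\gcd(m,(2t-1)k)=\gcd(m,3k)=\gcd(m,k)$.
   Context: All polynomials are over $\mathbb{F}_2$. *)

theory Defs
  imports "HOL-Computational_Algebra.Computational_Algebra" "Berlekamp_Zassenhaus.Finite_Field"
begin

type_synonym GF2 = "bool mod_ring"

text \<open>Polynomials over F_2 are represented as GF2 poly , i.e. polynomials over Z/2Z with bool as the 2-element index type (CARD(bool) = 2).\<close>

definition C_set :: "nat \<Rightarrow> nat set" where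
  "C_set t = {2 * i | i. 2 \<le> i \<and> i \<le> t} \<union> {1, 2 * t + 1}"

definition c_poly :: "nat \<Rightarrow> nat \<Rightarrow> GF2 poly" where
  "c_poly m t = 1 + (\<Sum>j\<in>C_set t. Polynomial.monom 1 j + Polynomial.monom 1 (m - j))"

end

theory Submission
  imports Defs
begin

text \<open>Put y = x^k. Modulo x^m - 1 the polynomial y^(2t+1) c(y) becomes
  P(y) = y^(2t+1) + sum over j in C of (y^(2t+1+j) + y^(2t+1-j)), and over F_2 one has
  (1 + y)^2 P(y) = (1 + y + y^2) (1 + y^(2t-1)) (1 + y^(2t+3)). Since c(1) = 1, a prime factor of
  x^m - 1 divides c(y) iff it divides one of y^3 - 1, y^(2t-1) - 1, y^(2t+3) - 1 but not y - 1.
  For odd a, a prime factor of gcd(x^m - 1, y^a - 1) = x^gcd(m,ak) - 1 outside x^gcd(m,k) - 1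
  exists iff the odd quotient r = gcd(m,ak) / gcd(m,k) exceeds 1: with u = x^gcd(m,k), the
  cofactor (u^r - 1) / (u - 1) is congruent to r = 1 modulo u - 1.\<close>

lemma power_sub_one_dvd_power_sub_one:
  fixes z :: "'a::comm_ring_1"
  assumes "a dvd b"
  shows "z ^ a - 1 dvd z ^ b - 1"
proof -
  obtain c where "b = a * c" using assms by blast
  then have "z ^ b - 1 = (z ^ a - 1) * (\<Sum>i<c. (z ^ a) ^ i)"
    by (simp add: power_mult power_diff_1_eq)
  then show ?thesis by simp
qed

lemma dvd_power_sub_one_gcd:
  fixes z :: "'a::comm_ring_1"
  shows "p dvd z ^ a - 1 \<Longrightarrow> p dvd z ^ b - 1 \<Longrightarrow> p dvd z ^ gcd a b - 1"
proof (induction a b rule: gcd_nat_induct)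
  case (base a)
  then show ?case by simp
next
  case (step a b)
  have "z ^ a - 1 = z ^ (a mod b) * (z ^ (b * (a div b)) - 1) + (z ^ (a mod b) - 1)"
    by (simp add: algebra_simps flip: power_add)
  moreover have "p dvd z ^ (b * (a div b)) - 1"
    using step.prems(2) power_sub_one_dvd_power_sub_one[of b "b * (a div b)" z] dvd_trans by simp
  ultimately have "p dvd z ^ (a mod b) - 1"
    using step.prems(1) by (metis dvd_add_right_iff dvd_mult)
  then show ?case
    using step.IH step.prems(2) step.hyps by (simp add: gcd_non_0_nat)
qed

lemma coprime_iff_no_common_prime_divisor:
  fixes a b :: "'a::factorial_semiring_gcd"
  assumes "b \<noteq> 0"
  shows "coprime a b \<longleftrightarrow> (\<forall>p. prime p \<longrightarrow> p dvd b \<longrightarrow> \<not> p dvd a)"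
proof
  assume "coprime a b"
  then show "\<forall>p. prime p \<longrightarrow> p dvd b \<longrightarrow> \<not> p dvd a"
    using coprime_common_divisor not_prime_unit by blast
next
  assume no_common: "\<forall>p. prime p \<longrightarrow> p dvd b \<longrightarrow> \<not> p dvd a"
  show "coprime a b"
  proof (rule ccontr)
    assume "\<not> coprime a b"
    then have "\<not> is_unit (gcd a b)" and "gcd a b \<noteq> 0"
      using assms is_unit_gcd by auto
    then obtain p where "prime p" "p dvd gcd a b"
      using prime_divisor_exists by blast
    then show False using no_common by auto
  qed
qed

lemma degree_X_power_sub_one:
  assumes "n > 0"
  shows "degree ([:0, 1:] ^ n - 1 :: 'a::comm_ring_1 poly) = n"
  unfolding diff_conv_add_uminus
  using assms by (subst degree_add_eq_left) (simp_all add: degree_linear_power)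

lemma prime_dvd_X_power_sub_one_not_dvd:
  fixes d r :: nat
  assumes "d > 0" and "r \<noteq> 1" and "\<not> CHAR('a) dvd r"
  shows "\<exists>q :: 'a::field_gcd poly. prime q \<and> q dvd [:0, 1:] ^ (d * r) - 1 \<and> \<not> q dvd [:0, 1:] ^ d - 1"
proof -
  define u :: "'a poly" where "u = [:0, 1:] ^ d"
  define S where "S = (\<Sum>i<r. u ^ i)"
  have r_pos: "r > 0"
    using assms(3) by (auto intro: Nat.gr0I)
  have factor: "[:0, 1:] ^ (d * r) - 1 = (u - 1) * S"
    unfolding S_def u_def power_diff_1_eq[symmetric] by (simp add: power_mult)
  have degree_u: "degree (u - 1) = d"
    using assms(1) by (simp add: u_def degree_X_power_sub_one)
  have degree_factor: "degree ((u - 1) * S) = d * r"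
    using assms(1) r_pos by (simp flip: factor add: degree_X_power_sub_one)
  have S_nonzero: "S \<noteq> 0"
    using degree_factor assms(1) r_pos by auto
  have "u - 1 \<noteq> 0"
    using degree_u assms(1) by auto
  then have "degree S = d * r - d"
    using degree_factor degree_u S_nonzero by (simp add: degree_mult_eq)
  moreover have "d * r > d * 1"
    using assms(1,2) r_pos by (intro mult_strict_left_mono) auto
  ultimately have "\<not> is_unit S"
    by (simp add: is_unit_iff_degree S_nonzero)
  then obtain q where q: "prime q" "q dvd S"
    using prime_divisor_exists S_nonzero by blast
  \<comment> \<open>S is congruent to r modulo u - 1, and r is a unit.\<close>
  have "S - of_nat r = (\<Sum>i<r. u ^ i - 1)"
    by (simp add: S_def sum_subtractf)
  then have S_cong: "u - 1 dvd S - of_nat r"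
    by (simp add: dvd_sum power_sub_one_dvd_power_sub_one[of 1, simplified])
  have r_unit: "is_unit (of_nat r :: 'a poly)"
    using assms(3) by (simp add: of_nat_poly is_unit_const_poly_iff of_nat_eq_0_iff_char_dvd)
  have "\<not> q dvd u - 1"
  proof
    assume "q dvd u - 1"
    then have "q dvd S - (S - of_nat r)"
      using S_cong q(2) dvd_trans dvd_diff by blast
    then have "q dvd of_nat r"
      by simp
    then show False
      using r_unit q(1) dvd_unit_imp_unit not_prime_unit by blast
  qed
  moreover have "q dvd [:0, 1:] ^ (d * r) - 1"
    using q(2) by (simp add: factor)
  ultimately show ?thesis
    using q(1) u_def by blast
qed

lemma gcd_mult_eq_gcd_times_dvd:
  fixes m k a :: nat
  assumes "m > 0"
  obtains r where "r dvd a" and "gcd m (a * k) = gcd m k * r"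
proof -
  have "gcd m k dvd gcd m (a * k)"
    by (simp add: gcd_mono)
  then obtain r where r: "gcd m (a * k) = gcd m k * r"
    by blast
  have "gcd m (a * k) dvd gcd (a * m) (a * k)"
    by simp
  then have "gcd m k * r dvd a * gcd m k"
    by (simp add: r gcd_mult_distrib_nat)
  then have "r dvd a"
    using assms by (simp add: mult.commute)
  then show thesis
    using r that by blast
qed

lemma gcd_mult_eq_gcd_iff_prime_factors:
  fixes m k a :: nat
  assumes "m > 0" and "\<not> CHAR('a) dvd a"
  shows "gcd m (a * k) = gcd m k \<longleftrightarrow>
    (\<forall>q :: 'a::field_gcd poly. prime q \<longrightarrow> q dvd [:0, 1:] ^ m - 1 \<longrightarrow>
      q dvd ([:0, 1:] ^ k) ^ a - 1 \<longrightarrow> q dvd [:0, 1:] ^ k - 1)"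
    (is "_ \<longleftrightarrow> (\<forall>q. ?no_new_factor q)")
proof
  assume gcd_eq: "gcd m (a * k) = gcd m k"
  show "\<forall>q. ?no_new_factor q"
  proof (intro allI impI)
    fix q :: "'a poly"
    assume "q dvd [:0, 1:] ^ m - 1" and "q dvd ([:0, 1:] ^ k) ^ a - 1"
    then have "q dvd [:0, 1:] ^ gcd m (k * a) - 1"
      using dvd_power_sub_one_gcd[of q "[:0, 1:]" m "k * a"] by (simp add: power_mult)
    then have "q dvd [:0, 1:] ^ gcd m k - 1"
      using gcd_eq by (simp add: mult.commute)
    then show "q dvd [:0, 1:] ^ k - 1"
      using power_sub_one_dvd_power_sub_one[of "gcd m k" k "[:0, 1:] :: 'a poly"] dvd_trans by auto
  qed
next
  assume no_new_factor: "\<forall>q. ?no_new_factor q"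
  show "gcd m (a * k) = gcd m k"
  proof (rule ccontr)
    assume gcd_ne: "gcd m (a * k) \<noteq> gcd m k"
    define d where "d = gcd m k"
    define e where "e = gcd m (a * k)"
    have d_pos: "d > 0"
      using assms(1) by (simp add: d_def)
    obtain r where "r dvd a" and e_eq: "e = d * r"
      using gcd_mult_eq_gcd_times_dvd[OF assms(1)] unfolding d_def e_def by blast
    then have "\<not> CHAR('a) dvd r"
      using assms(2) dvd_trans by blast
    moreover have "r \<noteq> 1"
      using gcd_ne e_eq by (simp add: d_def e_def)
    ultimately obtain q :: "'a poly" where q: "prime q" "q dvd [:0, 1:] ^ e - 1"
        "\<not> q dvd [:0, 1:] ^ d - 1"
      using prime_dvd_X_power_sub_one_not_dvd[OF d_pos] e_eq by blast
    have "q dvd [:0, 1:] ^ m - 1"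
      using q(2) power_sub_one_dvd_power_sub_one[of e m] dvd_trans by (auto simp: e_def)
    moreover have "[:0, 1:] ^ e - 1 dvd ([:0, 1:] ^ k) ^ a - (1 :: 'a poly)"
      unfolding power_mult[symmetric] by (rule power_sub_one_dvd_power_sub_one) (simp add: e_def mult.commute)
    then have "q dvd ([:0, 1:] ^ k) ^ a - 1"
      using q(2) dvd_trans by blast
    ultimately have "q dvd [:0, 1:] ^ d - 1"
      using no_new_factor q(1) dvd_power_sub_one_gcd[of q "[:0, 1:]" m k] by (simp add: d_def)
    then show False
      using q(3) by blast
  qed
qed

lemma power_sub_one_eq_one_add_power_CHAR_2:
  assumes "CHAR('a::comm_ring_1) = 2"
  shows "y ^ n - 1 = 1 + (y :: 'a) ^ n"
  using minus_CHAR_2[OF assms, of "y ^ n" 1] by (simp only: add.commute)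

lemma sub_one_dvd_power_add_power_CHAR_2:
  fixes y :: "'a::comm_ring_1"
  assumes "CHAR('a) = 2"
  shows "y - 1 dvd y ^ a + y ^ b"
proof -
  have "y ^ a + y ^ b = (y ^ a - 1) + (y ^ b - 1)"
    using of_nat_CHAR[where 'a = 'a] by (simp add: assms minus_CHAR_2 algebra_simps)
  then show ?thesis
    using power_sub_one_dvd_power_sub_one[of 1 _ y] by (simp only: power_one_right one_dvd dvd_add)
qed

lemma one_sub_square_mult_sum_powers:
  fixes z :: "'a::comm_ring_1"
  shows "(1 - z ^ 2) * (\<Sum>l<n. z ^ (a + 2 * l)) = z ^ a - z ^ (a + 2 * n)"
proof (induction n)
  case (Suc n)
  have "(1 - z ^ 2) * (\<Sum>l<Suc n. z ^ (a + 2 * l)) =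
      (z ^ a - z ^ (a + 2 * n)) + (1 - z ^ 2) * z ^ (a + 2 * n)"
    by (simp add: Suc.IH distrib_left)
  also have "\<dots> = z ^ a - z ^ (a + 2 * Suc n)"
    by (simp add: algebra_simps power_add power2_eq_square)
  finally show ?case .
qed simp

text \<open>The reduction of y^(2t+1) c(y) modulo y^m - 1; unlike c it does not depend on m.\<close>

definition c_shift :: "nat \<Rightarrow> 'a::comm_ring_1 \<Rightarrow> 'a" where
  "c_shift t y = y ^ (2 * t + 1) + (\<Sum>j\<in>C_set t. y ^ (2 * t + 1 + j) + y ^ (2 * t + 1 - j))"

lemma C_set_le: "j \<in> C_set t \<Longrightarrow> j \<le> 2 * t + 1"
  by (auto simp: C_set_def)

lemma sum_C_set:
  assumes "t > 0"
  shows "sum f (C_set t) = (\<Sum>i=2..t. f (2 * i)) + f 1 + f (2 * t + 1)"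
proof -
  have C_set_eq: "C_set t = (\<lambda>i. 2 * i) ` {2..t} \<union> {1, 2 * t + 1}"
    by (auto simp: C_set_def)
  have "(\<lambda>i. 2 * i) ` {2..t} \<inter> {1, 2 * t + 1} = {}"
    by auto presburger
  moreover have "inj_on (\<lambda>i::nat. 2 * i) {2..t}"
    by (auto simp: inj_on_def)
  ultimately show ?thesis
    using assms by (simp add: C_set_eq sum.union_disjoint sum.reindex ac_simps)
qed

lemma power_mult_c_eq_c_shift:
  fixes y :: "'a::comm_ring_1"
  assumes "2 * t + 1 \<le> m"
  shows "y ^ (2 * t + 1) * (1 + (\<Sum>j\<in>C_set t. y ^ j + y ^ (m - j))) =
    c_shift t y + (y ^ m - 1) * (\<Sum>j\<in>C_set t. y ^ (2 * t + 1 - j))"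
proof -
  have each_term: "y ^ (2 * t + 1) * (y ^ j + y ^ (m - j)) =
      y ^ (2 * t + 1 + j) + y ^ (2 * t + 1 - j) + (y ^ m - 1) * y ^ (2 * t + 1 - j)"
    if "j \<in> C_set t" for j
  proof -
    have exponent: "2 * t + 1 + (m - j) = (2 * t + 1 - j) + m"
      using C_set_le[OF that] assms by simp
    have "y ^ (2 * t + 1) * y ^ (m - j) = y ^ (2 * t + 1 - j) * y ^ m"
      unfolding power_add[symmetric] exponent ..
    then show ?thesis
      by (simp add: algebra_simps power_add)
  qed
  have "y ^ (2 * t + 1) * (1 + (\<Sum>j\<in>C_set t. y ^ j + y ^ (m - j))) =
      y ^ (2 * t + 1) + (\<Sum>j\<in>C_set t. y ^ (2 * t + 1) * (y ^ j + y ^ (m - j)))"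
    by (simp add: distrib_left sum_distrib_left)
  also have "\<dots> = y ^ (2 * t + 1) + (\<Sum>j\<in>C_set t.
      y ^ (2 * t + 1 + j) + y ^ (2 * t + 1 - j) + (y ^ m - 1) * y ^ (2 * t + 1 - j))"
    using each_term by simp
  finally show ?thesis
    by (simp add: c_shift_def sum.distrib sum_distrib_left add.assoc)
qed

lemma c_shift_expand:
  fixes z :: "'a::comm_ring_1"
  assumes "t > 0"
  shows "c_shift t z = 1 + z ^ (2 * t) + z ^ (2 * t + 1) + z ^ (2 * t + 2) + z ^ (4 * t + 2)
    + (\<Sum>l<t - 1. z ^ (1 + 2 * l)) + (\<Sum>l<t - 1. z ^ (2 * t + 5 + 2 * l))"
proof -
  have low: "(\<Sum>i=2..t. f (2 * t + 1 - 2 * i)) = (\<Sum>l<t - 1. f (1 + 2 * l))" for f :: "nat \<Rightarrow> 'a"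
    by (rule sum.reindex_bij_witness[of _ "\<lambda>l. t - l" "\<lambda>i. t - i"])
      (use assms in \<open>auto intro!: arg_cong[of _ _ f]\<close>)
  have high: "(\<Sum>i=2..t. f (2 * t + 1 + 2 * i)) = (\<Sum>l<t - 1. f (2 * t + 5 + 2 * l))" for f :: "nat \<Rightarrow> 'a"
    by (rule sum.reindex_bij_witness[of _ "\<lambda>l. l + 2" "\<lambda>i. i - 2"])
      (use assms in \<open>auto intro!: arg_cong[of _ _ f]\<close>)
  have exponents: "2 * t + 1 + 1 = 2 * t + 2" "2 * t + 1 - 1 = 2 * t"
    "2 * t + 1 + (2 * t + 1) = 4 * t + 2" "2 * t + 1 - (2 * t + 1) = 0"
    by simp_all
  show ?thesis
    unfolding c_shift_def sum_C_set[OF assms] sum.distrib low[of "power z"] high[of "power z"]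
      exponents power_0
    by (simp add: ac_simps)
qed

lemma c_shift_factorization:
  fixes z :: "'a::comm_ring_1"
  assumes "CHAR('a) = 2" and "t > 0"
  shows "(1 + z ^ 2) * c_shift t z = (1 + z + z ^ 2) * (1 + z ^ (2 * t - 1)) * (1 + z ^ (2 * t + 3))"
proof -
  have geometric: "(1 + z ^ 2) * (\<Sum>l<n. z ^ (a + 2 * l)) = z ^ a + z ^ (a + 2 * n)" for n a
    using one_sub_square_mult_sum_powers[where z = z and n = n and a = a] by (simp only: minus_CHAR_2[OF assms(1)])
  obtain s where t: "t = Suc s"
    using assms(2) gr0_implies_Suc by blast
  define w where "w = z ^ (2 * t - 1)"
  have exponents: "z ^ (2 * t) = z * w" "z ^ (2 * t + 1) = z ^ 2 * w" "z ^ (2 * t + 2) = z ^ 3 * w"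
    "z ^ (4 * t + 2) = z ^ 4 * w ^ 2" "z ^ (1 + 2 * (t - 1)) = w" "z ^ (2 * t + 5) = z ^ 6 * w"
    "z ^ (2 * t + 5 + 2 * (t - 1)) = z ^ 5 * w ^ 2" "z ^ (2 * t + 3) = z ^ 4 * w"
    unfolding w_def t by (simp_all add: power_add power_mult power_mult_distrib eval_nat_numeral mult_ac)
  have "(1 + z ^ 2) * c_shift t z = (1 + z ^ 2) * (1 + z ^ (2 * t) + z ^ (2 * t + 1) + z ^ (2 * t + 2)
      + z ^ (4 * t + 2)) + (1 + z ^ 2) * (\<Sum>l<t - 1. z ^ (1 + 2 * l))
      + (1 + z ^ 2) * (\<Sum>l<t - 1. z ^ (2 * t + 5 + 2 * l))"
    by (simp only: c_shift_expand[OF assms(2)] distrib_left)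
  also have "\<dots> = (1 + z ^ 2) * (1 + z * w + z ^ 2 * w + z ^ 3 * w + z ^ 4 * w ^ 2)
      + (z + w) + (z ^ 6 * w + z ^ 5 * w ^ 2)"
    by (simp only: geometric exponents power_one_right)
  also have "\<dots> = (1 + z + z ^ 2) * (1 + w) * (1 + z ^ 4 * w) + 2 * (z ^ 3 * w)"
    by (simp add: algebra_simps eval_nat_numeral)
  also have "\<dots> = (1 + z + z ^ 2) * (1 + z ^ (2 * t - 1)) * (1 + z ^ (2 * t + 3))"
    using of_nat_CHAR[where 'a = 'a] by (simp add: assms(1) exponents(8) w_def)
  finally show ?thesis .
qed

lemma one_add_square_eq_square_CHAR_2:
  assumes "CHAR('a::comm_ring_1) = 2"
  shows "1 + (y :: 'a) ^ 2 = (y - 1) ^ 2"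
  using of_nat_CHAR[where 'a = 'a]
  by (simp add: assms minus_CHAR_2 power2_eq_square algebra_simps)

lemma prime_dvd_c_iff:
  fixes q y :: "'a::factorial_ring_gcd"
  assumes char: "CHAR('a) = 2" and q: "prime q" "q dvd y ^ m - 1"
    and "m > 0" and "t > 0" and "2 * t + 1 \<le> m"
  shows "q dvd 1 + (\<Sum>j\<in>C_set t. y ^ j + y ^ (m - j)) \<longleftrightarrow>
    q dvd (1 + y + y ^ 2) * (1 + y ^ (2 * t - 1)) * (1 + y ^ (2 * t + 3)) \<and> \<not> q dvd y - 1"
    (is "q dvd ?c \<longleftrightarrow> q dvd ?factors \<and> _")
proof -
  have "\<not> q dvd y"
  proof
    assume "q dvd y"
    then have "q dvd y ^ m"
      using \<open>m > 0\<close> dvd_power[of m y] dvd_trans by blast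
    then have "q dvd y ^ m - (y ^ m - 1)"
      using q(2) by (rule dvd_diff)
    then show False
      using q(1) not_prime_unit by simp
  qed
  then have not_dvd_power: "\<not> q dvd y ^ (2 * t + 1)"
    using q(1) prime_dvd_power by blast
  have shift: "y ^ (2 * t + 1) * ?c = c_shift t y + (y ^ m - 1) * (\<Sum>j\<in>C_set t. y ^ (2 * t + 1 - j))"
    using power_mult_c_eq_c_shift \<open>2 * t + 1 \<le> m\<close> by blast
  have "q dvd (y ^ m - 1) * (\<Sum>j\<in>C_set t. y ^ (2 * t + 1 - j))"
    using q(2) by simp
  then have "q dvd y ^ (2 * t + 1) * ?c \<longleftrightarrow> q dvd c_shift t y"
    unfolding shift by (rule dvd_add_left_iff)
  then have c_iff_c_shift: "q dvd ?c \<longleftrightarrow> q dvd c_shift t y"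
    using not_dvd_power prime_dvd_mult_iff[OF q(1)] by blast
  have "y - 1 dvd ?c - 1"
    using sub_one_dvd_power_add_power_CHAR_2[OF char] by (simp add: dvd_sum)
  have avoids_y_sub_one: "\<not> q dvd y - 1" if "q dvd ?c"
  proof
    assume "q dvd y - 1"
    then have "q dvd ?c - (?c - 1)"
      using that \<open>y - 1 dvd ?c - 1\<close> dvd_trans dvd_diff by blast
    then show False
      using q(1) not_prime_unit by simp
  qed
  have "?factors = (y - 1) ^ 2 * c_shift t y"
    using c_shift_factorization[OF char \<open>t > 0\<close>] one_add_square_eq_square_CHAR_2[OF char] by simp
  then have "q dvd ?factors \<and> \<not> q dvd y - 1 \<longleftrightarrow> q dvd c_shift t y \<and> \<not> q dvd y - 1"
    using q(1) by (auto simp: prime_dvd_mult_iff dest: prime_dvd_power)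
  then show ?thesis
    using c_iff_c_shift avoids_y_sub_one by blast
qed

lemma prime_dvd_factors_iff:
  fixes q y :: "'a::factorial_ring_gcd"
  assumes char: "CHAR('a) = 2" and "prime q" and "\<not> q dvd y - 1"
  shows "q dvd (1 + y + y ^ 2) * (1 + y ^ a) * (1 + y ^ b) \<longleftrightarrow>
    q dvd y ^ 3 - 1 \<or> q dvd y ^ a - 1 \<or> q dvd y ^ b - 1"
proof -
  have "y ^ 3 - 1 = (y - 1) * (1 + y + y ^ 2)"
    by (simp add: algebra_simps eval_nat_numeral)
  then have "q dvd y ^ 3 - 1 \<longleftrightarrow> q dvd 1 + y + y ^ 2"
    using assms(2,3) by (simp add: prime_dvd_mult_iff)
  then show ?thesis
    using assms(2) by (simp add: prime_dvd_mult_iff power_sub_one_eq_one_add_power_CHAR_2[OF char])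
qed

lemma coprime_c_iff_no_new_prime_factor:
  fixes y M :: "'a::factorial_ring_gcd"
  assumes char: "CHAR('a) = 2" and "M \<noteq> 0" and "M dvd y ^ m - 1"
    and "m > 0" and "t > 0" and "2 * t + 1 \<le> m"
  shows "coprime (1 + (\<Sum>j\<in>C_set t. y ^ j + y ^ (m - j))) M \<longleftrightarrow>
    (\<forall>a\<in>{2 * t + 3, 2 * t - 1, 3}. \<forall>q. prime q \<longrightarrow> q dvd M \<longrightarrow> q dvd y ^ a - 1 \<longrightarrow> q dvd y - 1)"
proof -
  have "\<not> q dvd 1 + (\<Sum>j\<in>C_set t. y ^ j + y ^ (m - j)) \<longleftrightarrow>
      (\<forall>a\<in>{2 * t + 3, 2 * t - 1, 3}. q dvd y ^ a - 1 \<longrightarrow> q dvd y - 1)" if "prime q" "q dvd M" for q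
    using prime_dvd_c_iff[OF char that(1) dvd_trans[OF that(2) assms(3)] assms(4-6)]
      prime_dvd_factors_iff[OF char that(1)]
    by (cases "q dvd y - 1") auto
  then show ?thesis
    using coprime_iff_no_common_prime_divisor[OF assms(2)] by blast
qed

lemma pcompose_monom_one: "pcompose (Polynomial.monom (1::'a::comm_ring_1) n) q = q ^ n"
  by (induction n) (simp_all add: monom_altdef pcompose_mult pcompose_pCons)

lemma pcompose_c_poly: "pcompose (c_poly m t) p = 1 + (\<Sum>j\<in>C_set t. p ^ j + p ^ (m - j))"
  by (simp add: c_poly_def pcompose_add pcompose_sum pcompose_monom_one)

theorem proposition10:
  fixes m k t :: nat
  assumes "0 < m" and "0 < k" and "0 < t"
    and "real t < (real m - 1) / 4"
  shows "gcd (pcompose (c_poly m t) (Polynomial.monom 1 k)) (Polynomial.monom 1 m - 1) = 1 \<longleftrightarrow>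
         (gcd m ((2 * t + 3) * k) = gcd m k \<and> gcd m ((2 * t - 1) * k) = gcd m k
          \<and> gcd m (3 * k) = gcd m k)"
proof -
  define y :: "GF2 poly" where "y = [:0, 1:] ^ k"
  define M :: "GF2 poly" where "M = [:0, 1:] ^ m - 1"
  have "2 * t + 1 \<le> m"
    using assms(4) by (simp add: field_simps)
  have "M \<noteq> 0"
    using degree_X_power_sub_one[OF assms(1), where 'a = GF2] assms(1) by (auto simp: M_def)
  have "M dvd y ^ m - 1"
    unfolding M_def y_def power_mult[symmetric] by (rule power_sub_one_dvd_power_sub_one) simp
  have gcd_iff: "gcd m (a * k) = gcd m k \<longleftrightarrow>
      (\<forall>q. prime q \<longrightarrow> q dvd M \<longrightarrow> q dvd y ^ a - 1 \<longrightarrow> q dvd y - 1)" if "odd a" for a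
    using gcd_mult_eq_gcd_iff_prime_factors[where 'a = GF2 and a = a and k = k, OF assms(1)] that
    unfolding M_def y_def by simp
  have "coprime (pcompose (c_poly m t) y) M \<longleftrightarrow>
      (\<forall>a\<in>{2 * t + 3, 2 * t - 1, 3}. gcd m (a * k) = gcd m k)"
    using coprime_c_iff_no_new_prime_factor[OF _ \<open>M \<noteq> 0\<close> \<open>M dvd y ^ m - 1\<close> assms(1,3)
        \<open>2 * t + 1 \<le> m\<close>] gcd_iff assms(3)
    by (simp add: pcompose_c_poly)
  then show ?thesis
    by (simp add: coprime_iff_gcd_eq_1 y_def M_def monom_altdef)
qed

end
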